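(* Let $S$ be a semigroup with an ideal $I$, and let $\alpha_1,\dots,\alpha_n$ be congruences of $S$ with $\alpha_j\le\rho_I$ for all $j$. Then $[\alpha_1,\dots,\alpha_n]_S$ is the congruence of $S$ generated by $[\alpha_1|_I,\dots,\alpha_n|_I]_I$ (the commutator computed in the semigroup $I$ of the restricted congruences $\alpha_j|_I=\alpha_j\cap(I\times I)$).
   Context: For an ideal $I$ of $S$, the Rees congruence is $\rho_I=(I\times I)\cup\{(s,s):s\in S\}$. For an algebra $\mathbf A$ and congruences $\alpha_1,\dots,\alpha_n$, $M_{\mathbf A}(\alpha_1,\dots,\alpha_n)$ is the subalgebra of $\mathbf A^{\{0,1\}^n}$ generated by all $g$ such that for some $i$ and $(a,b)\in\alpha_i$, $g(x)=a$ if $x_i=0$ and $g(x)=b$ if $x_i=1$; the commutator $[\alpha_1,\dots,\alpha_n]_{\mathbf A}$ is the smallest congruence $\delta$ of $\mathbf A$ such that for all $f\in M_{\mathbf A}(\alpha_1,\dots,\alpha_n)$: if $(f(x0),f(x1))\in\delta$ for all $x\in\{0,1\}^{n-1}\setminus\{(1,\dots,1)\}$, then $(f(1,\dots,1,0),f(1,\dots,1,1))\in\delta$. *)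

theory Defs
  imports Main
begin

text \<open>Relative versions allow treating an ideal
  I of S as a semigroup with the restricted operation.\<close>

definition semigroup_on :: "'a set \<Rightarrow> ('a \<Rightarrow> 'a \<Rightarrow> 'a) \<Rightarrow> bool" where
  "semigroup_on S mul \<longleftrightarrow>
     (\<forall>a\<in>S. \<forall>b\<in>S. mul a b \<in> S) \<and>
     (\<forall>a\<in>S. \<forall>b\<in>S. \<forall>c\<in>S. mul (mul a b) c = mul a (mul b c))"

definition ideal_on :: "'a set \<Rightarrow> ('a \<Rightarrow> 'a \<Rightarrow> 'a) \<Rightarrow> 'a set \<Rightarrow> bool" where
  "ideal_on S mul I \<longleftrightarrow> I \<subseteq> S \<and> I \<noteq> {} \<and>
     (\<forall>s\<in>S. \<forall>i\<in>I. mul s i \<in> I \<and> mul i s \<in> I)"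

definition congruence_on :: "'a set \<Rightarrow> ('a \<Rightarrow> 'a \<Rightarrow> 'a) \<Rightarrow> 'a rel \<Rightarrow> bool" where
  "congruence_on A mul \<theta> \<longleftrightarrow> equiv A \<theta> \<and>
     (\<forall>a b c d. (a, b) \<in> \<theta> \<longrightarrow> (c, d) \<in> \<theta> \<longrightarrow> (mul a c, mul b d) \<in> \<theta>)"

definition rees :: "'a set \<Rightarrow> 'a set \<Rightarrow> 'a rel" where
  "rees S I = (I \<times> I) \<union> Id_on S"

definition Cg :: "'a set \<Rightarrow> ('a \<Rightarrow> 'a \<Rightarrow> 'a) \<Rightarrow> 'a rel \<Rightarrow> 'a rel" where
  "Cg A mul R = \<Inter>{\<theta>. congruence_on A mul \<theta> \<and> R \<subseteq> \<theta>}"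

text \<open>Elements of {0,1}^n are boolean lists of length n (False = 0, True = 1);
  congruences alpha_1..alpha_n are indexed as al 0, ..., al (n-1).
  M_A(al_1..al_n) is the set of functions bool list => 'a generated (under the
  pointwise operation) by the functions x |-> (if x!i then b else a), (a,b) in al i.
  Only their values on the cube {0,1}^n matter.\<close>
inductive_set Mset :: "('a \<Rightarrow> 'a \<Rightarrow> 'a) \<Rightarrow> (nat \<Rightarrow> 'a rel) \<Rightarrow> nat \<Rightarrow> (bool list \<Rightarrow> 'a) set"
  for mul :: "'a \<Rightarrow> 'a \<Rightarrow> 'a" and al :: "nat \<Rightarrow> 'a rel" and n :: nat where
  gen: "i < n \<Longrightarrow> (a, b) \<in> al i \<Longrightarrow> (\<lambda>x. if x ! i then b else a) \<in> Mset mul al n"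
| prod: "g \<in> Mset mul al n \<Longrightarrow> h \<in> Mset mul al n \<Longrightarrow> (\<lambda>x. mul (g x) (h x)) \<in> Mset mul al n"

definition comm_closed :: "('a \<Rightarrow> 'a \<Rightarrow> 'a) \<Rightarrow> (nat \<Rightarrow> 'a rel) \<Rightarrow> nat \<Rightarrow> 'a rel \<Rightarrow> bool" where
  "comm_closed mul al n \<delta> \<longleftrightarrow>
     (\<forall>g\<in>Mset mul al n.
        (\<forall>x. length x = n - 1 \<and> x \<noteq> replicate (n - 1) True \<longrightarrow>
              (g (x @ [False]), g (x @ [True])) \<in> \<delta>) \<longrightarrow>
        (g (replicate (n - 1) True @ [False]), g (replicate (n - 1) True @ [True])) \<in> \<delta>)"

definition commutator :: "'a set \<Rightarrow> ('a \<Rightarrow> 'a \<Rightarrow> 'a) \<Rightarrow> (nat \<Rightarrow> 'a rel) \<Rightarrow> nat \<Rightarrow> 'a rel" where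
  "commutator A mul al n = \<Inter>{\<delta>. congruence_on A mul \<delta> \<and> comm_closed mul al n \<delta>}"

end

theory Submission
  imports Defs
begin

text \<open>Since every \<open>\<alpha>\<^sub>j\<close> lies below the Rees congruence, a generator of
  \<open>M\<^sub>S(\<alpha>\<^sub>1, \<dots>, \<alpha>\<^sub>n)\<close> is either constant or takes its values in \<open>I\<close>; and
  multiplying a member of \<open>M\<^sub>I(\<alpha>\<^sub>1|\<^sub>I, \<dots>, \<alpha>\<^sub>n|\<^sub>I)\<close> pointwise by a fixed element of
  \<open>S\<close> stays inside it, because the \<open>\<alpha>\<^sub>j\<close> are congruences of \<open>S\<close> and \<open>I\<close> is an ideal.
  So every member of \<open>M\<^sub>S(\<alpha>)\<close> is constant or lies in \<open>M\<^sub>I(\<alpha>|\<^sub>I)\<close>.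
  The same absorption shows that \<open>\<delta> = [\<alpha>|\<^sub>I]\<^sub>I\<close> is compatible with multiplication
  by elements of \<open>S\<close>, so \<open>\<delta> \<union> Id_on S\<close> is a congruence of \<open>S\<close>, namely the one generated
  by \<open>\<delta>\<close>; by the dichotomy it satisfies the term condition for \<open>\<alpha>\<close>, whence
  \<open>[\<alpha>]\<^sub>S \<subseteq> \<delta> \<union> Id_on S\<close>. Conversely \<open>[\<alpha>]\<^sub>S \<inter> I \<times> I\<close> satisfies the term condition
  for \<open>\<alpha>|\<^sub>I\<close>, so \<open>\<delta> \<subseteq> [\<alpha>]\<^sub>S\<close>.\<close>

lemma congruence_onI:
  assumes "\<theta> \<subseteq> A \<times> A" and "\<And>a. a \<in> A \<Longrightarrow> (a, a) \<in> \<theta>" and "sym \<theta>" and "trans \<theta>"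
    and "\<And>a b c d. (a, b) \<in> \<theta> \<Longrightarrow> (c, d) \<in> \<theta> \<Longrightarrow> (mul a c, mul b d) \<in> \<theta>"
  shows "congruence_on A mul \<theta>"
  using assms unfolding congruence_on_def by (simp add: equivI refl_onI)

lemma congruence_on_subset: "congruence_on A mul \<theta> \<Longrightarrow> \<theta> \<subseteq> A \<times> A"
  unfolding congruence_on_def equiv_def by blast

lemma congruence_on_refl: "congruence_on A mul \<theta> \<Longrightarrow> a \<in> A \<Longrightarrow> (a, a) \<in> \<theta>"
  unfolding congruence_on_def equiv_def refl_on_def by blast

lemma congruence_on_sym: "congruence_on A mul \<theta> \<Longrightarrow> sym \<theta>"
  unfolding congruence_on_def equiv_def by blast

lemma congruence_on_trans: "congruence_on A mul \<theta> \<Longrightarrow> trans \<theta>"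
  unfolding congruence_on_def equiv_def by blast

lemma congruence_on_mul:
  "congruence_on A mul \<theta> \<Longrightarrow> (a, b) \<in> \<theta> \<Longrightarrow> (c, d) \<in> \<theta> \<Longrightarrow> (mul a c, mul b d) \<in> \<theta>"
  unfolding congruence_on_def by blast

lemma congruence_on_Times:
  "\<forall>a\<in>A. \<forall>b\<in>A. mul a b \<in> A \<Longrightarrow> congruence_on A mul (A \<times> A)"
  by (rule congruence_onI) (auto simp: sym_def trans_def)

lemma congruence_on_Inter:
  assumes "F \<noteq> {}" and cong: "\<And>\<theta>. \<theta> \<in> F \<Longrightarrow> congruence_on A mul \<theta>"
  shows "congruence_on A mul (\<Inter>F)"
proof (rule congruence_onI)
  show "\<Inter>F \<subseteq> A \<times> A"
    using assms congruence_on_subset by blast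
  show "(a, a) \<in> \<Inter>F" if "a \<in> A" for a
    using that congruence_on_refl[OF cong] by blast
  show "sym (\<Inter>F)"
    by (rule symI) (blast dest: cong congruence_on_sym symD)
  show "trans (\<Inter>F)"
    by (rule transI) (blast dest: cong congruence_on_trans transD)
  show "(mul a c, mul b d) \<in> \<Inter>F" if "(a, b) \<in> \<Inter>F" and "(c, d) \<in> \<Inter>F" for a b c d
    using that by (blast dest: cong congruence_on_mul)
qed
lemma congruence_on_restrict:
  assumes cong: "congruence_on A mul \<theta>" and "B \<subseteq> A"
    and closed: "\<forall>a\<in>B. \<forall>b\<in>B. mul a b \<in> B"
  shows "congruence_on B mul (\<theta> \<inter> B \<times> B)"
proof (rule congruence_onI)
  show "(a, a) \<in> \<theta> \<inter> B \<times> B" if "a \<in> B" for a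
    using that \<open>B \<subseteq> A\<close> congruence_on_refl[OF cong] by blast
  show "sym (\<theta> \<inter> B \<times> B)"
    using congruence_on_sym[OF cong] unfolding sym_def by blast
  show "trans (\<theta> \<inter> B \<times> B)"
    using congruence_on_trans[OF cong] unfolding trans_def by blast
  show "(mul a c, mul b d) \<in> \<theta> \<inter> B \<times> B"
    if "(a, b) \<in> \<theta> \<inter> B \<times> B" and "(c, d) \<in> \<theta> \<inter> B \<times> B" for a b c d
    using that congruence_on_mul[OF cong] closed by blast
qed blast

lemma Cg_eq_Un_Id_on:
  assumes "congruence_on A mul (R \<union> Id_on A)"
  shows "Cg A mul R = R \<union> Id_on A"
proof
  show "Cg A mul R \<subseteq> R \<union> Id_on A"
    using assms unfolding Cg_def by blast
  show "R \<union> Id_on A \<subseteq> Cg A mul R"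
    unfolding Cg_def using congruence_on_refl by fastforce
qed

lemma Mset_in_carrier:
  assumes "g \<in> Mset mul al n" and "\<forall>j<n. al j \<subseteq> A \<times> A"
    and "\<forall>a\<in>A. \<forall>b\<in>A. mul a b \<in> A"
  shows "g x \<in> A"
  using assms by (induction rule: Mset.induct) auto

lemma Mset_mono:
  assumes "\<And>j. j < n \<Longrightarrow> al j \<subseteq> be j"
  shows "Mset mul al n \<subseteq> Mset mul be n"
proof
  fix g assume "g \<in> Mset mul al n"
  then show "g \<in> Mset mul be n"
    by (induction rule: Mset.induct) (use assms in \<open>auto intro: Mset.intros\<close>)
qed

lemma comm_closedI:
  assumes "\<And>g. g \<in> Mset mul al n \<Longrightarrow>
    (\<And>x. length x = n - 1 \<Longrightarrow> x \<noteq> replicate (n - 1) True \<Longrightarrow>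
      (g (x @ [False]), g (x @ [True])) \<in> \<delta>) \<Longrightarrow>
    (g (replicate (n - 1) True @ [False]), g (replicate (n - 1) True @ [True])) \<in> \<delta>"
  shows "comm_closed mul al n \<delta>"
  using assms unfolding comm_closed_def by blast

lemma comm_closedD:
  assumes "comm_closed mul al n \<delta>" and "g \<in> Mset mul al n"
    and "\<And>x. length x = n - 1 \<Longrightarrow> x \<noteq> replicate (n - 1) True \<Longrightarrow>
      (g (x @ [False]), g (x @ [True])) \<in> \<delta>"
  shows "(g (replicate (n - 1) True @ [False]), g (replicate (n - 1) True @ [True])) \<in> \<delta>"
  using assms unfolding comm_closed_def by blast

lemma comm_closed_Inter:
  "(\<And>\<delta>. \<delta> \<in> F \<Longrightarrow> comm_closed mul al n \<delta>) \<Longrightarrow> comm_closed mul al n (\<Inter>F)"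
  unfolding comm_closed_def by blast

lemma commutator_comm_closed: "comm_closed mul al n (commutator A mul al n)"
  unfolding commutator_def by (rule comm_closed_Inter) blast

lemma commutator_least:
  "congruence_on A mul \<delta> \<Longrightarrow> comm_closed mul al n \<delta> \<Longrightarrow> commutator A mul al n \<subseteq> \<delta>"
  unfolding commutator_def by blast

lemma commutator_congruence:
  assumes closed: "\<forall>a\<in>A. \<forall>b\<in>A. mul a b \<in> A"
    and "\<forall>j<n. al j \<subseteq> A \<times> A"
  shows "congruence_on A mul (commutator A mul al n)"
proof -
  have "comm_closed mul al n (A \<times> A)"
    using Mset_in_carrier[OF _ assms(2) closed] unfolding comm_closed_def by blast
  then have "A \<times> A \<in> {\<delta>. congruence_on A mul \<delta> \<and> comm_closed mul al n \<delta>}"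
    using congruence_on_Times[OF closed] by blast
  then show ?thesis
    unfolding commutator_def by (intro congruence_on_Inter) auto
qed

lemma commutator_restrict_subset:
  assumes closed: "\<forall>a\<in>A. \<forall>b\<in>A. mul a b \<in> A"
    and "B \<subseteq> A" and closed_B: "\<forall>a\<in>B. \<forall>b\<in>B. mul a b \<in> B"
    and al: "\<forall>j<n. al j \<subseteq> A \<times> A"
  shows "commutator B mul (\<lambda>j. al j \<inter> B \<times> B) n \<subseteq> commutator A mul al n"
proof -
  let ?C = "commutator A mul al n"
  have "commutator B mul (\<lambda>j. al j \<inter> B \<times> B) n \<subseteq> ?C \<inter> B \<times> B"
  proof (rule commutator_least)
    show "congruence_on B mul (?C \<inter> B \<times> B)"
      using congruence_on_restrict[OF commutator_congruence[OF closed al] assms(2) closed_B] .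
    show "comm_closed mul (\<lambda>j. al j \<inter> B \<times> B) n (?C \<inter> B \<times> B)"
    proof (rule comm_closedI)
      fix g assume g: "g \<in> Mset mul (\<lambda>j. al j \<inter> B \<times> B) n"
        and off_top: "\<And>x. length x = n - 1 \<Longrightarrow> x \<noteq> replicate (n - 1) True \<Longrightarrow>
          (g (x @ [False]), g (x @ [True])) \<in> ?C \<inter> B \<times> B"
      have "g \<in> Mset mul al n"
        using g Mset_mono[of n "\<lambda>j. al j \<inter> B \<times> B" al] by blast
      from comm_closedD[OF commutator_comm_closed this] off_top
      show "(g (replicate (n - 1) True @ [False]), g (replicate (n - 1) True @ [True]))
          \<in> ?C \<inter> B \<times> B"
        using Mset_in_carrier[OF g _ closed_B] by blast
    qed
  qed
  then show ?thesis by blast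
qed


locale semigroup_ideal =
  fixes S :: "'a set" and mul :: "'a \<Rightarrow> 'a \<Rightarrow> 'a" and I :: "'a set"
  assumes semigroup: "semigroup_on S mul" and ideal: "ideal_on S mul I"
begin

lemma mul_closed: "\<forall>a\<in>S. \<forall>b\<in>S. mul a b \<in> S"
  using semigroup unfolding semigroup_on_def by blast

lemma mul_assoc: "a \<in> S \<Longrightarrow> b \<in> S \<Longrightarrow> c \<in> S \<Longrightarrow> mul (mul a b) c = mul a (mul b c)"
  using semigroup unfolding semigroup_on_def by blast

lemma ideal_subset: "I \<subseteq> S"
  using ideal unfolding ideal_on_def by blast

lemma mul_ideal_left: "s \<in> S \<Longrightarrow> i \<in> I \<Longrightarrow> mul s i \<in> I"
  using ideal unfolding ideal_on_def by blast

lemma mul_ideal_right: "i \<in> I \<Longrightarrow> s \<in> S \<Longrightarrow> mul i s \<in> I"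
  using ideal unfolding ideal_on_def by blast

lemma ideal_mul_closed: "\<forall>a\<in>I. \<forall>b\<in>I. mul a b \<in> I"
  using ideal_subset mul_ideal_left by blast

definition translation_stable :: "'a rel \<Rightarrow> 'a rel" where
  "translation_stable \<theta> =
    {(a, b) \<in> \<theta>. \<forall>u\<in>S. (mul u a, mul u b) \<in> \<theta> \<and> (mul a u, mul b u) \<in> \<theta>}"

lemma congruence_on_translation_stable:
  assumes cong: "congruence_on I mul \<theta>"
  shows "congruence_on I mul (translation_stable \<theta>)"
proof (rule congruence_onI)
  have \<theta>: "\<theta> \<subseteq> I \<times> I"
    using congruence_on_subset[OF cong] .
  then show "translation_stable \<theta> \<subseteq> I \<times> I"
    unfolding translation_stable_def by blast
  show "(a, a) \<in> translation_stable \<theta>" if "a \<in> I" for a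
    using that congruence_on_refl[OF cong] mul_ideal_left mul_ideal_right
    unfolding translation_stable_def by blast
  show "sym (translation_stable \<theta>)"
    using congruence_on_sym[OF cong] unfolding sym_def translation_stable_def by blast
  show "trans (translation_stable \<theta>)"
    using congruence_on_trans[OF cong] unfolding trans_def translation_stable_def by blast
  fix a b c d
  assume ab: "(a, b) \<in> translation_stable \<theta>" and cd: "(c, d) \<in> translation_stable \<theta>"
  then have in_S: "a \<in> S" "b \<in> S" "c \<in> S" "d \<in> S"
    using \<theta> ideal_subset unfolding translation_stable_def by blast+
  have "(mul a c, mul b d) \<in> \<theta>"
    using ab cd congruence_on_mul[OF cong] unfolding translation_stable_def by blast
  moreover have "(mul u (mul a c), mul u (mul b d)) \<in> \<theta>" if u: "u \<in> S" for u
  proof -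
    have "(mul (mul u a) c, mul (mul u b) d) \<in> \<theta>"
      using u ab cd congruence_on_mul[OF cong] unfolding translation_stable_def by blast
    then show ?thesis
      using u in_S by (simp add: mul_assoc)
  qed
  moreover have "(mul (mul a c) u, mul (mul b d) u) \<in> \<theta>" if u: "u \<in> S" for u
  proof -
    have "(mul a (mul c u), mul b (mul d u)) \<in> \<theta>"
      using u ab cd congruence_on_mul[OF cong] unfolding translation_stable_def by blast
    then show ?thesis
      using u in_S by (simp add: mul_assoc)
  qed
  ultimately show "(mul a c, mul b d) \<in> translation_stable \<theta>"
    unfolding translation_stable_def by blast
qed

lemma congruence_on_Un_Id_on:
  assumes cong: "congruence_on I mul \<theta>" and stable: "\<theta> \<subseteq> translation_stable \<theta>"
  shows "congruence_on S mul (\<theta> \<union> Id_on S)"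
proof (rule congruence_onI)
  show "\<theta> \<union> Id_on S \<subseteq> S \<times> S"
    using congruence_on_subset[OF cong] ideal_subset by blast
  show "sym (\<theta> \<union> Id_on S)"
    using congruence_on_sym[OF cong] unfolding sym_def by blast
  show "trans (\<theta> \<union> Id_on S)"
    using congruence_on_trans[OF cong] unfolding trans_def by blast
  show "(mul a c, mul b d) \<in> \<theta> \<union> Id_on S"
    if "(a, b) \<in> \<theta> \<union> Id_on S" and "(c, d) \<in> \<theta> \<union> Id_on S" for a b c d
    using that congruence_on_mul[OF cong] stable mul_closed
    unfolding translation_stable_def by blast
qed blast

end

locale semigroup_ideal_congruences = semigroup_ideal +
  fixes al :: "nat \<Rightarrow> 'a rel" and n :: nat
  assumes congruences: "\<forall>j<n. congruence_on S mul (al j)"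
begin

abbreviation al_I :: "nat \<Rightarrow> 'a rel" where
  "al_I \<equiv> \<lambda>j. al j \<inter> I \<times> I"

lemma Mset_restrict_in_ideal: "g \<in> Mset mul al_I n \<Longrightarrow> g x \<in> I"
  by (rule Mset_in_carrier[OF _ _ ideal_mul_closed]) auto

lemma Mset_restrict_mul_left:
  assumes "h \<in> Mset mul al_I n" and c: "c \<in> S"
  shows "(\<lambda>x. mul c (h x)) \<in> Mset mul al_I n"
  using assms(1)
proof (induction rule: Mset.induct)
  case (gen i a b)
  have cong_i: "congruence_on S mul (al i)"
    using congruences gen.hyps(1) by blast
  have "(mul c a, mul c b) \<in> al i"
    using congruence_on_mul[OF cong_i congruence_on_refl[OF cong_i c] IntD1[OF gen.hyps(2)]] .
  moreover have "a \<in> I" "b \<in> I"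
    using gen.hyps(2) by blast+
  ultimately have "(mul c a, mul c b) \<in> al_I i"
    using c mul_ideal_left by blast
  then have "(\<lambda>x. if x ! i then mul c b else mul c a) \<in> Mset mul al_I n"
    by (rule Mset.gen[OF gen.hyps(1)])
  then show ?case
    by (simp add: if_distrib)
next
  case (prod f g)
  have "(\<lambda>x. mul (mul c (f x)) (g x)) \<in> Mset mul al_I n"
    using prod.IH(1) prod.hyps(2) by (rule Mset.prod)
  moreover have "mul (mul c (f x)) (g x) = mul c (mul (f x) (g x))" for x
    using c prod.hyps Mset_restrict_in_ideal ideal_subset mul_assoc by blast
  ultimately show ?case
    by simp
qed

lemma Mset_restrict_mul_right:
  assumes "h \<in> Mset mul al_I n" and c: "c \<in> S"
  shows "(\<lambda>x. mul (h x) c) \<in> Mset mul al_I n"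
  using assms(1)
proof (induction rule: Mset.induct)
  case (gen i a b)
  have cong_i: "congruence_on S mul (al i)"
    using congruences gen.hyps(1) by blast
  have "(mul a c, mul b c) \<in> al i"
    using congruence_on_mul[OF cong_i IntD1[OF gen.hyps(2)] congruence_on_refl[OF cong_i c]] .
  moreover have "a \<in> I" "b \<in> I"
    using gen.hyps(2) by blast+
  ultimately have "(mul a c, mul b c) \<in> al_I i"
    using c mul_ideal_right by blast
  then have "(\<lambda>x. if x ! i then mul b c else mul a c) \<in> Mset mul al_I n"
    by (rule Mset.gen[OF gen.hyps(1)])
  then show ?case
    by (simp only: if_distrib[of "\<lambda>y. mul y c"])
next
  case (prod f g)
  have "(\<lambda>x. mul (f x) (mul (g x) c)) \<in> Mset mul al_I n"
    using prod.hyps(1) prod.IH(2) by (rule Mset.prod)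
  moreover have "mul (f x) (mul (g x) c) = mul (mul (f x) (g x)) c" for x
    using c prod.hyps Mset_restrict_in_ideal ideal_subset mul_assoc by (metis subsetD)
  ultimately show ?case
    by simp
qed

lemma comm_closed_translation_stable:
  assumes cc: "comm_closed mul al_I n \<theta>"
  shows "comm_closed mul al_I n (translation_stable \<theta>)"
proof (rule comm_closedI)
  fix g assume g: "g \<in> Mset mul al_I n"
    and off_top: "\<And>x. length x = n - 1 \<Longrightarrow> x \<noteq> replicate (n - 1) True \<Longrightarrow>
      (g (x @ [False]), g (x @ [True])) \<in> translation_stable \<theta>"
  let ?top = "replicate (n - 1) True"
  have "(g (?top @ [False]), g (?top @ [True])) \<in> \<theta>"
    using comm_closedD[OF cc g] off_top unfolding translation_stable_def by blast
  moreover have "(mul u (g (?top @ [False])), mul u (g (?top @ [True]))) \<in> \<theta>" if u: "u \<in> S" for u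
    using comm_closedD[OF cc Mset_restrict_mul_left[OF g u]] off_top u
    unfolding translation_stable_def by blast
  moreover have "(mul (g (?top @ [False])) u, mul (g (?top @ [True])) u) \<in> \<theta>" if u: "u \<in> S" for u
    using comm_closedD[OF cc Mset_restrict_mul_right[OF g u]] off_top u
    unfolding translation_stable_def by blast
  ultimately show "(g (?top @ [False]), g (?top @ [True])) \<in> translation_stable \<theta>"
    unfolding translation_stable_def by blast
qed

lemma commutator_restrict_translation_stable:
  "commutator I mul al_I n \<subseteq> translation_stable (commutator I mul al_I n)"
proof (rule commutator_least)
  have "congruence_on I mul (commutator I mul al_I n)"
    by (rule commutator_congruence[OF ideal_mul_closed]) auto
  then show "congruence_on I mul (translation_stable (commutator I mul al_I n))"
    by (rule congruence_on_translation_stable)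
  show "comm_closed mul al_I n (translation_stable (commutator I mul al_I n))"
    using comm_closed_translation_stable[OF commutator_comm_closed] .
qed

lemma Mset_const_or_restrict:
  assumes below_rees: "\<forall>j<n. al j \<subseteq> rees S I" and "g \<in> Mset mul al n"
  shows "(\<exists>c\<in>S. g = (\<lambda>_. c)) \<or> g \<in> Mset mul al_I n"
  using assms(2)
proof (induction rule: Mset.induct)
  case (gen i a b)
  then have "(a, b) \<in> I \<times> I \<or> (a = b \<and> a \<in> S)"
    using below_rees unfolding rees_def by blast
  then show ?case
  proof
    assume "(a, b) \<in> I \<times> I"
    then have "(a, b) \<in> al_I i"
      using gen.hyps(2) by blast
    then show ?case
      using Mset.gen[where al = al_I, OF gen.hyps(1)] by blast
  qed auto
next
  case (prod f g)
  from prod.IH show ?case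
  proof (elim disjE)
    assume "\<exists>c\<in>S. f = (\<lambda>_. c)" and "\<exists>c\<in>S. g = (\<lambda>_. c)"
    then show ?case
      using mul_closed by auto
  next
    assume "\<exists>c\<in>S. f = (\<lambda>_. c)" and "g \<in> Mset mul al_I n"
    then show ?case
      using Mset_restrict_mul_left by auto
  next
    assume "f \<in> Mset mul al_I n" and "\<exists>c\<in>S. g = (\<lambda>_. c)"
    then show ?case
      using Mset_restrict_mul_right by auto
  next
    assume "f \<in> Mset mul al_I n" and "g \<in> Mset mul al_I n"
    then show ?case
      using Mset.prod by blast
  qed
qed

lemma comm_closed_Un_Id_on:
  assumes below_rees: "\<forall>j<n. al j \<subseteq> rees S I"
    and cong: "congruence_on I mul \<theta>" and cc: "comm_closed mul al_I n \<theta>"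
  shows "comm_closed mul al n (\<theta> \<union> Id_on S)"
proof (rule comm_closedI)
  fix g assume g: "g \<in> Mset mul al n"
    and off_top: "\<And>x. length x = n - 1 \<Longrightarrow> x \<noteq> replicate (n - 1) True \<Longrightarrow>
      (g (x @ [False]), g (x @ [True])) \<in> \<theta> \<union> Id_on S"
  let ?top = "replicate (n - 1) True"
  from Mset_const_or_restrict[OF below_rees g]
  show "(g (?top @ [False]), g (?top @ [True])) \<in> \<theta> \<union> Id_on S"
  proof
    assume "\<exists>c\<in>S. g = (\<lambda>_. c)"
    then show ?thesis
      by auto
  next
    assume g_I: "g \<in> Mset mul al_I n"
    have "(g (x @ [False]), g (x @ [True])) \<in> \<theta>"
      if "length x = n - 1" and "x \<noteq> ?top" for x
    proof -
      have "(g (x @ [True]), g (x @ [True])) \<in> \<theta>"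
        using congruence_on_refl[OF cong Mset_restrict_in_ideal[OF g_I]] .
      then show ?thesis
        using off_top[OF that] by auto
    qed
    then show ?thesis
      using comm_closedD[OF cc g_I] by blast
  qed
qed

end

theorem lemma2p2:
  fixes S I :: "'a set" and mul :: "'a \<Rightarrow> 'a \<Rightarrow> 'a"
    and al :: "nat \<Rightarrow> 'a rel" and n :: nat
  assumes "semigroup_on S mul"
    and "ideal_on S mul I"
    and "n \<ge> 1"
    and "\<forall>j<n. congruence_on S mul (al j)"
    and "\<forall>j<n. al j \<subseteq> rees S I"
  shows "commutator S mul al n = Cg S mul (commutator I mul (\<lambda>j. al j \<inter> (I \<times> I)) n)"
proof -
  interpret semigroup_ideal_congruences S mul I al n
    using assms(1,2,4) by unfold_locales
  let ?C = "commutator S mul al n" and ?D = "commutator I mul al_I n"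
  have al_S: "\<forall>j<n. al j \<subseteq> S \<times> S"
    using assms(4) congruence_on_subset by blast
  have D: "congruence_on I mul ?D"
    by (rule commutator_congruence[OF ideal_mul_closed]) auto
  have D_Id: "congruence_on S mul (?D \<union> Id_on S)"
    using congruence_on_Un_Id_on[OF D commutator_restrict_translation_stable] .
  have "?C \<subseteq> ?D \<union> Id_on S"
    using commutator_least[OF D_Id comm_closed_Un_Id_on[OF assms(5) D commutator_comm_closed]] .
  moreover have "?D \<union> Id_on S \<subseteq> ?C"
    using commutator_restrict_subset[OF mul_closed ideal_subset ideal_mul_closed al_S]
      congruence_on_refl[OF commutator_congruence[OF mul_closed al_S]] by blast
  ultimately show ?thesis
    using Cg_eq_Un_Id_on[OF D_Id] by blast
qed

end
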